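(* Every semifilter $\mathcal{S}$ (viewed as a subspace of $2^\omega$) is homogeneous.
   Context: A semifilter (on $\omega$) is a collection $\mathcal{S}\subseteq\mathcal{P}(\omega)$ such that $\varnothing\notin\mathcal{S}$, $\omega\in\mathcal{S}$, $\mathcal{S}$ is closed under finite modifications (if $x\in\mathcal{S}$ and $y\subseteq\omega$ with $(x\setminus y)\cup(y\setminus x)$ finite then $y\in\mathcal{S}$), and $\mathcal{S}$ is upward-closed. Subsets of $\mathcal{P}(\omega)$ are identified via characteristic functions with subspaces of $2^\omega$. A space $X$ is homogeneous if for all $x,y\in X$ there is a homeomorphism $h:X\to X$ with $h(x)=y$. *)

theory Defs
  imports "HOL-Analysis.Analysis"
begin

definition semifilter :: "nat set set \<Rightarrow> bool" where
  "semifilter S \<longleftrightarrow>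
     {} \<notin> S \<and> UNIV \<in> S \<and>
     (\<forall>x\<in>S. \<forall>y. finite ((x - y) \<union> (y - x)) \<longrightarrow> y \<in> S) \<and>
     (\<forall>x\<in>S. \<forall>y. x \<subseteq> y \<longrightarrow> y \<in> S)"

text \<open>Characteristic function: identifies P(omega) with 2^omega = nat => bool,
  which carries the product topology of discrete bool.\<close>
definition char_fun :: "nat set \<Rightarrow> (nat \<Rightarrow> bool)" where
  "char_fun A = (\<lambda>n. n \<in> A)"

definition homogeneous :: "'a::topological_space set \<Rightarrow> bool" where
  "homogeneous X \<longleftrightarrow> (\<forall>x\<in>X. \<forall>y\<in>X. \<exists>h k. homeomorphism X X h k \<and> h x = y)"

end

theory Submission
  imports Defs "HOL-Combinatorics.Transposition"
begin

text \<open>For points p and q of a set of sequences, let h transpose the values p k and q k in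
  coordinate k of z whenever z agrees with p below k. Then h p = q, the same construction with
  p and q exchanged inverts h, each coordinate of h z depends on finitely many coordinates of z
  so h is continuous, and h changes any z \<noteq> p only up to the first place where z leaves p.
  Hence h is a self-homeomorphism of every set closed under finite modifications, such as the
  image of a semifilter in the Cantor space.\<close>

definition prefix_swap :: "(nat \<Rightarrow> 'a) \<Rightarrow> (nat \<Rightarrow> 'a) \<Rightarrow> (nat \<Rightarrow> 'a) \<Rightarrow> nat \<Rightarrow> 'a" where
  "prefix_swap p q z k =
     (if \<forall>j<k. z j = p j then Transposition.transpose (p k) (q k) (z k) else z k)"

lemma prefix_swap_agrees_below:
  "(\<forall>j<k. prefix_swap p q z j = q j) \<longleftrightarrow> (\<forall>j<k. z j = p j)"
proof (induction k)
  case 0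
  show ?case by simp
next
  case (Suc k)
  show ?case
  proof (cases "\<forall>j<k. z j = p j")
    case True
    then have "prefix_swap p q z k = q k \<longleftrightarrow> z k = p k"
      by (auto simp: prefix_swap_def transpose_eq_iff)
    with True Suc.IH show ?thesis by (simp add: All_less_Suc)
  next
    case False
    with Suc.IH show ?thesis by (auto simp: All_less_Suc)
  qed
qed

lemma prefix_swap_inverse: "prefix_swap q p (prefix_swap p q z) = z"
proof
  fix k
  show "prefix_swap q p (prefix_swap p q z) k = z k"
  proof (cases "\<forall>j<k. z j = p j")
    case True
    then have "\<forall>j<k. prefix_swap p q z j = q j"
      by (simp add: prefix_swap_agrees_below)
    moreover have "prefix_swap p q z k = Transposition.transpose (p k) (q k) (z k)"
      using True by (simp add: prefix_swap_def)
    ultimately show ?thesis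
      unfolding prefix_swap_def[of q p] by (simp add: transpose_commute)
  next
    case False
    then have "\<not> (\<forall>j<k. prefix_swap p q z j = q j)"
      by (simp add: prefix_swap_agrees_below)
    moreover have "prefix_swap p q z k = z k"
      using False by (auto simp: prefix_swap_def)
    ultimately show ?thesis
      unfolding prefix_swap_def[of q p] by auto
  qed
qed

lemma prefix_swap_first: "prefix_swap p q p = q"
  by (simp add: prefix_swap_def fun_eq_iff)

lemma prefix_swap_eq_after_deviation:
  assumes "z n \<noteq> p n" and "n < k"
  shows "prefix_swap p q z k = z k"
  using assms by (auto simp: prefix_swap_def)

lemma finite_prefix_swap_changes:
  assumes "z \<noteq> p"
  shows "finite {k. prefix_swap p q z k \<noteq> z k}"
proof -
  from assms obtain n where "z n \<noteq> p n" by auto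
  then have "{k. prefix_swap p q z k \<noteq> z k} \<subseteq> {..n}"
    using prefix_swap_eq_after_deviation[where q = q] by (auto intro: leI)
  then show ?thesis by (rule finite_subset) simp
qed

lemma continuous_on_finitely_determined:
  fixes g :: "(nat \<Rightarrow> 'a::discrete_topology) \<Rightarrow> 'b::topological_space"
  assumes "\<And>z w. \<forall>j<N. z j = w j \<Longrightarrow> g z = g w"
  shows "continuous_on UNIV g"
proof -
  have "(g \<longlongrightarrow> g z) (at z within UNIV)" for z
  proof -
    have "\<forall>\<^sub>F w in nhds z. w j = z j" for j
    proof -
      have "open ((\<lambda>w::nat \<Rightarrow> 'a. w j) -` {z j} \<inter> UNIV)"
        using continuous_on_product_coordinates[of j, where 'b='a] open_discrete[of "{z j}"]
        unfolding continuous_on_open_vimage[OF open_UNIV] by blast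
      then have "open {w. w j = z j}" by (simp add: vimage_def)
      from eventually_nhds_in_open[OF this] show ?thesis by simp
    qed
    then have "\<forall>\<^sub>F w in nhds z. \<forall>j\<in>{..<N}. w j = z j"
      by (intro eventually_ball_finite) auto
    then have "\<forall>\<^sub>F w in nhds z. g w = g z"
      by (rule eventually_mono) (rule assms, simp)
    then have "\<forall>\<^sub>F w in at z within UNIV. g w = g z"
      unfolding eventually_at_filter by (rule eventually_mono) simp
    then show ?thesis by (rule tendsto_eventually)
  qed
  then show ?thesis by (simp add: continuous_on_def)
qed

lemma continuous_on_prefix_swap:
  "continuous_on UNIV (prefix_swap p q :: (nat \<Rightarrow> 'a::discrete_topology) \<Rightarrow> _)"
proof (rule continuous_on_coordinatewise_then_product)
  fix k
  show "continuous_on UNIV (\<lambda>z. prefix_swap p q z k)"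
    by (rule continuous_on_finitely_determined[where N = "Suc k"])
      (auto simp: prefix_swap_def less_Suc_eq)
qed

lemma prefix_swap_image_subset:
  assumes closed: "\<And>z w. z \<in> X \<Longrightarrow> finite {k. w k \<noteq> z k} \<Longrightarrow> w \<in> X"
    and "p \<in> X" "q \<in> X"
  shows "prefix_swap p q ` X \<subseteq> X"
proof
  fix w assume "w \<in> prefix_swap p q ` X"
  then obtain z where "z \<in> X" and w: "w = prefix_swap p q z" by blast
  show "w \<in> X"
  proof (cases "z = p")
    case True
    with w \<open>q \<in> X\<close> show ?thesis by (simp add: prefix_swap_first)
  next
    case False
    then have "finite {k. w k \<noteq> z k}" by (simp add: w finite_prefix_swap_changes)
    with closed \<open>z \<in> X\<close> show ?thesis by blast
  qed
qed

lemma homogeneous_if_closed_under_finite_modification: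
  fixes X :: "(nat \<Rightarrow> 'a::discrete_topology) set"
  assumes "\<And>z w. z \<in> X \<Longrightarrow> finite {k. w k \<noteq> z k} \<Longrightarrow> w \<in> X"
  shows "homogeneous X"
  unfolding homogeneous_def
proof (intro ballI)
  fix p q assume "p \<in> X" "q \<in> X"
  have "homeomorphism X X (prefix_swap p q) (prefix_swap q p)"
    by (intro homeomorphismI continuous_on_subset[OF continuous_on_prefix_swap]
        prefix_swap_image_subset[OF assms] \<open>p \<in> X\<close> \<open>q \<in> X\<close> subset_UNIV)
      (simp_all add: prefix_swap_inverse)
  with prefix_swap_first show "\<exists>h k. homeomorphism X X h k \<and> h p = q" by blast
qed

theorem corollary4p3:
  fixes S :: "nat set set"
  assumes "semifilter S"
  shows "homogeneous (char_fun ` S)"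
proof (rule homogeneous_if_closed_under_finite_modification)
  fix z w assume "z \<in> char_fun ` S" and finite_diff: "finite {k. w k \<noteq> z k}"
  then obtain x where "x \<in> S" "z = char_fun x" by blast
  moreover have "(x - Collect w) \<union> (Collect w - x) = {k. w k \<noteq> z k}"
    using \<open>z = char_fun x\<close> by (auto simp: char_fun_def)
  ultimately have "Collect w \<in> S"
    using assms finite_diff unfolding semifilter_def by metis
  moreover have "w = char_fun (Collect w)" by (simp add: char_fun_def)
  ultimately show "w \<in> char_fun ` S" by blast
qed

end
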